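(* Let $n\in\mathbb N$ and $S\subseteq[n-1]$. Then $$F_{n,S}(\mathbf x)=\sum_{\alpha}\frac{\Psi_\alpha(\mathbf x)}{z_\alpha}(-1)^{|S\setminus S_\alpha|},$$ where the sum ranges over all compositions $\alpha$ of $n$ such that $S$ is $\alpha$-unimodal.
   Context: A composition $\alpha=(\alpha_1,\dots,\alpha_\ell)$ of $n$ is a sequence of positive integers summing to $n$; $\ell(\alpha)=\ell$; $S_\alpha=\{\alpha_1,\alpha_1+\alpha_2,\dots,\alpha_1+\dots+\alpha_{\ell-1}\}$; blocks $B_i(\alpha)=\{\alpha_1+\dots+\alpha_{i-1}+1,\dots,\alpha_1+\dots+\alpha_i\}$. $\alpha\le\beta$ means $S_\beta\subseteq S_\alpha$. A set $S\subseteq[n-1]$ is $\alpha$-unimodal if for every $i$ the set $S\cap(B_i(\alpha)\setminus S_\alpha)$ is an initial segment (in increasing order) of $B_i(\alpha)\setminus S_\alpha$. Quasisymmetric functions in $\mathbf x=(x_1,x_2,\dots)$: monomial $M_\alpha=\sum_{i_1<\dots<i_\ell}x_{i_1}^{\alpha_1}\cdots x_{i_\ell}^{\alpha_\ell}$; fundamental $F_{n,S}=\sum x_{j_1}\cdots x_{j_n}$ over $j_1\le\dots\le j_n$ with $j_i<j_{i+1}$ for $i\in S$. $z_\alpha=\prod_{i\ge1}i^{m_i}m_i!$ with $m_i$ the number of parts equal to $i$. For a composition $\gamma$ set $\pi(\gamma)=\prod_{i=1}^{\ell(\gamma)}(\gamma_1+\dots+\gamma_i)$; for $\alpha\le\beta$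 set $\pi(\alpha,\beta)=\prod_{i=1}^{\ell(\beta)}\pi(\alpha^{(i)})$, where $\alpha^{(i)}$ is the composition of $\beta_i$ formed by the parts $\alpha_j$ with $B_j(\alpha)\subseteq B_i(\beta)$. The quasisymmetric power sum is $\Psi_\alpha=z_\alpha\sum_{\beta\ge\alpha}\frac{1}{\pi(\alpha,\beta)}M_\beta$. *)

theory Defs
  imports Complex_Main
begin

text \<open>Quasisymmetric functions in
infinitely many variables x_0, x_1, ... are represented by their coefficient
functions: a monomial is an exponent vector e :: nat \<Rightarrow> nat (finite support),
and a series is a map from exponent vectors to real coefficients.\<close>

definition compositions :: "nat \<Rightarrow> nat list set" where
  "compositions n = {\<alpha>. (\<forall>a\<in>set \<alpha>. 0 < a) \<and> sum_list \<alpha> = n}"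

definition Sset :: "nat list \<Rightarrow> nat set" where
  "Sset \<alpha> = {sum_list (take k \<alpha>) | k. 1 \<le> k \<and> k \<le> length \<alpha> - 1}"

text \<open>Block B_(k+1)(alpha), 0-indexed by k < length alpha.\<close>
definition block :: "nat list \<Rightarrow> nat \<Rightarrow> nat set" where
  "block \<alpha> k = {sum_list (take k \<alpha>) + 1 .. sum_list (take (Suc k) \<alpha>)}"

definition comp_le :: "nat list \<Rightarrow> nat list \<Rightarrow> bool" where
  "comp_le \<alpha> \<beta> \<longleftrightarrow> Sset \<beta> \<subseteq> Sset \<alpha>"

definition unimodal :: "nat list \<Rightarrow> nat set \<Rightarrow> bool" where
  "unimodal \<alpha> S \<longleftrightarrow>
     (\<forall>k < length \<alpha>. \<forall>x \<in> S \<inter> (block \<alpha> k - Sset \<alpha>).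
        \<forall>y \<in> block \<alpha> k - Sset \<alpha>. y < x \<longrightarrow> y \<in> S)"

definition z :: "nat list \<Rightarrow> nat" where
  "z \<alpha> = (\<Prod>i\<in>set \<alpha>. i ^ count_list \<alpha> i * fact (count_list \<alpha> i))"

definition pi_comp :: "nat list \<Rightarrow> nat" where
  "pi_comp \<gamma> = (\<Prod>i=1..length \<gamma>. sum_list (take i \<gamma>))"

definition refine_part :: "nat list \<Rightarrow> nat list \<Rightarrow> nat \<Rightarrow> nat list" where
  "refine_part \<alpha> \<beta> i = map (\<lambda>j. \<alpha> ! j) (filter (\<lambda>j. block \<alpha> j \<subseteq> block \<beta> i) [0..<length \<alpha>])"

definition pi_pair :: "nat list \<Rightarrow> nat list \<Rightarrow> nat" where
  "pi_pair \<alpha> \<beta> = (\<Prod>i<length \<beta>. pi_comp (refine_part \<alpha> \<beta> i))"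

text \<open>Coefficient of x^e in M_alpha: sum over i_1 < ... < i_l of x_(i_1)^(alpha_1)...\<close>
definition M_coeff :: "nat list \<Rightarrow> (nat \<Rightarrow> nat) \<Rightarrow> real" where
  "M_coeff \<alpha> e = real (card {is. length is = length \<alpha> \<and> sorted_wrt (<) is \<and>
      (\<forall>v. e v = (\<Sum>k<length \<alpha>. if is ! k = v then \<alpha> ! k else 0))})"

text \<open>Coefficient of x^e in F_(n,S): sum over j_1 \<le> ... \<le> j_n with j_i < j_(i+1) for i \<in> S.
 (List positions are 0-indexed, so j_i is js ! (i-1).)\<close>
definition F_coeff :: "nat \<Rightarrow> nat set \<Rightarrow> (nat \<Rightarrow> nat) \<Rightarrow> real" where
  "F_coeff n S e = real (card {js. length js = n \<and> sorted js \<and>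
      (\<forall>i\<in>S. js ! (i - 1) < js ! i) \<and> (\<forall>v. count_list js v = e v)})"

definition Psi_coeff :: "nat list \<Rightarrow> (nat \<Rightarrow> nat) \<Rightarrow> real" where
  "Psi_coeff \<alpha> e = real (z \<alpha>) *
     (\<Sum>\<beta> | \<beta> \<in> compositions (sum_list \<alpha>) \<and> comp_le \<alpha> \<beta>.
        M_coeff \<beta> e / real (pi_pair \<alpha> \<beta>))"

end

theory Submission
  imports Defs "HOL-Library.Multiset"
begin

text \<open>
Expand both sides in monomials. The monomial x^e occurs in F_{n,S}, with coefficient 1, exactly
when its exponent composition beta (the nonzero exponents of e, in the order of the variables) is
a composition of n with S \<subseteq> S_beta, and M_gamma contains x^e only for gamma = beta. So the claim
is the identity
  sum over alpha \<le> beta with S alpha-unimodal of (-1)^|S - S_alpha| / pi(alpha, beta) = [S \<subseteq> S_beta].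
The refinements of beta = (a, beta') are the concatenations of a composition of a with a
refinement of beta', and unimodality, sign and pi factor along this splitting; induction on beta
reduces the identity to one block,
  sum over compositions alpha of m with T alpha-unimodal of (-1)^|T - S_alpha| / pi(alpha) = [T = {}].
This follows by strong induction on m, splitting off the last part m - d of alpha: it contributes
the factor 1/m, by induction only d \<le> min T survives, and unimodality of the last block leaves
just d = min T - 1 and d = min T, whose terms cancel.
\<close>

definition composition :: "nat list \<Rightarrow> bool" where
  "composition \<alpha> \<longleftrightarrow> (\<forall>a\<in>set \<alpha>. 0 < a)"

lemma composition_Nil [simp]: "composition []"
  and composition_Cons [simp]: "composition (a # \<alpha>) \<longleftrightarrow> 0 < a \<and> composition \<alpha>"
  and composition_append [simp]: "composition (\<alpha> @ \<beta>) \<longleftrightarrow> composition \<alpha> \<and> composition \<beta>"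
  by (auto simp: composition_def)

lemma mem_compositions_iff: "\<alpha> \<in> compositions n \<longleftrightarrow> composition \<alpha> \<and> sum_list \<alpha> = n"
  by (auto simp: compositions_def composition_def)

lemma composition_sum_list_eq_0_iff: "composition \<alpha> \<Longrightarrow> sum_list \<alpha> = 0 \<longleftrightarrow> \<alpha> = []"
  by (cases \<alpha>) (auto simp: composition_def)

lemma compositions_0: "compositions 0 = {[]}"
  using composition_sum_list_eq_0_iff by (auto simp: mem_compositions_iff)

lemma composition_length_le: "composition \<alpha> \<Longrightarrow> length \<alpha> \<le> sum_list \<alpha>"
  by (induction \<alpha>) auto

lemma finite_compositions: "finite (compositions n)"
proof (rule finite_subset)
  show "compositions n \<subseteq> {\<alpha>. set \<alpha> \<subseteq> {..n} \<and> length \<alpha> \<le> n}"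
    by (auto simp: mem_compositions_iff dest: composition_length_le member_le_sum_list)
qed (rule finite_lists_length_le, auto)

lemma Sset_conv_image: "Sset \<alpha> = (\<lambda>k. sum_list (take k \<alpha>)) ` {1..<length \<alpha>}"
proof -
  have "{k. 1 \<le> k \<and> k \<le> length \<alpha> - 1} = {1..<length \<alpha>}" by auto
  then show ?thesis unfolding Sset_def by blast
qed

lemma sum_list_take_le: "sum_list (take k \<alpha>) \<le> sum_list (\<alpha> :: nat list)"
  by (metis append_take_drop_id le_add1 sum_list_append)

lemma sum_list_take_less:
  assumes "composition \<alpha>" "k < length \<alpha>"
  shows "sum_list (take k \<alpha>) < sum_list \<alpha>"
proof -
  have "drop k \<alpha> \<noteq> []" "composition (drop k \<alpha>)"
    using assms by (auto simp: composition_def dest: in_set_dropD)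
  then have "0 < sum_list (drop k \<alpha>)" using composition_sum_list_eq_0_iff by blast
  then show ?thesis by (metis add_less_cancel_left append_take_drop_id sum_list_append add_0_right)
qed

lemma sum_list_take_pos:
  assumes "composition \<alpha>" "1 \<le> k" "k \<le> length \<alpha>"
  shows "0 < sum_list (take k \<alpha>)"
proof -
  have "take k \<alpha> \<noteq> []" "composition (take k \<alpha>)"
    using assms by (auto simp: composition_def dest: in_set_takeD)
  then show ?thesis using composition_sum_list_eq_0_iff by blast
qed

lemma Sset_subset: "composition \<alpha> \<Longrightarrow> Sset \<alpha> \<subseteq> {1..<sum_list \<alpha>}"
  unfolding Sset_conv_image using sum_list_take_less sum_list_take_pos by (auto simp: Suc_le_eq)

lemma Sset_Nil [simp]: "Sset [] = {}"
  and Sset_singleton [simp]: "Sset [a] = {}"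
  by (auto simp: Sset_def)

lemma Sset_append:
  "Sset (\<alpha> @ \<beta>) = Sset \<alpha> \<union> (if \<alpha> \<noteq> [] \<and> \<beta> \<noteq> [] then {sum_list \<alpha>} else {}) \<union>
     (+) (sum_list \<alpha>) ` Sset \<beta>"
proof -
  let ?l = "length \<alpha>"
  have blocks: "{1..<?l + length \<beta>} =
      {1..<?l} \<union> (if \<alpha> \<noteq> [] \<and> \<beta> \<noteq> [] then {?l} else {}) \<union> (+) ?l ` {1..<length \<beta>}"
  proof (intro set_eqI iffI)
    fix k assume k: "k \<in> {1..<?l + length \<beta>}"
    show "k \<in> {1..<?l} \<union> (if \<alpha> \<noteq> [] \<and> \<beta> \<noteq> [] then {?l} else {}) \<union> (+) ?l ` {1..<length \<beta>}"
    proof (cases "k \<le> ?l")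
      case False
      then have "k = ?l + (k - ?l)" by simp
      then show ?thesis using k False by (auto simp del: add_diff_inverse_nat)
    qed (use k in auto)
  qed (auto simp: Suc_le_eq split: if_splits)
  have front: "(\<lambda>k. sum_list (take k (\<alpha> @ \<beta>))) ` {1..<?l} = (\<lambda>k. sum_list (take k \<alpha>)) ` {1..<?l}"
    by (rule image_cong) auto
  have tail: "(\<lambda>k. sum_list (take k (\<alpha> @ \<beta>))) ` (+) ?l ` {1..<length \<beta>} =
      (+) (sum_list \<alpha>) ` (\<lambda>k. sum_list (take k \<beta>)) ` {1..<length \<beta>}"
    unfolding image_image by (rule image_cong) simp_all
  show ?thesis unfolding Sset_conv_image length_append blocks image_Un front tail by auto
qed

lemma Sset_Cons: "Sset (a # \<beta>) = (if \<beta> \<noteq> [] then {a} else {}) \<union> (+) a ` Sset \<beta>"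
  using Sset_append[of "[a]" \<beta>] by simp

lemma block_append_less: "k < length \<alpha> \<Longrightarrow> block (\<alpha> @ \<beta>) k = block \<alpha> k"
  by (simp add: block_def)

lemma block_append_shift: "block (\<alpha> @ \<beta>) (length \<alpha> + j) = (+) (sum_list \<alpha>) ` block \<beta> j"
  by (simp add: block_def add.assoc)

lemma block_Cons_0: "block (a # \<beta>) 0 = {1..a}"
  by (simp add: block_def)

lemma block_Cons_Suc: "block (a # \<beta>) (Suc j) = (+) a ` block \<beta> j"
  using block_append_shift[of "[a]" \<beta> j] by simp

lemma block_subset: "k < length \<alpha> \<Longrightarrow> block \<alpha> k \<subseteq> {1..sum_list \<alpha>}"
  unfolding block_def using sum_list_take_le[of "Suc k" \<alpha>] by auto

lemma block_nonempty: "composition \<alpha> \<Longrightarrow> k < length \<alpha> \<Longrightarrow> block \<alpha> k \<noteq> {}"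
  unfolding block_def by (auto simp: take_Suc_conv_app_nth composition_def Suc_le_eq)

definition shift_down :: "nat \<Rightarrow> nat set \<Rightarrow> nat set" where
  "shift_down p S = {x. 0 < x \<and> x + p \<in> S}"

definition down_closed_in :: "nat set \<Rightarrow> nat set \<Rightarrow> bool" where
  "down_closed_in S W \<longleftrightarrow> (\<forall>x\<in>S \<inter> W. \<forall>y\<in>W. y < x \<longrightarrow> y \<in> S)"

lemma unimodal_iff_down_closed_in:
  "unimodal \<alpha> S \<longleftrightarrow> (\<forall>k<length \<alpha>. down_closed_in S (block \<alpha> k - Sset \<alpha>))"
  unfolding unimodal_def down_closed_in_def by blast

lemma down_closed_in_Diff_max:
  assumes "W \<subseteq> {..p}"
  shows "down_closed_in S (W - {p}) \<longleftrightarrow> down_closed_in (S \<inter> {..<p}) W"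
proof
  assume H: "down_closed_in S (W - {p})"
  show "down_closed_in (S \<inter> {..<p}) W" unfolding down_closed_in_def
  proof (intro ballI impI)
    fix x y assume x: "x \<in> S \<inter> {..<p} \<inter> W" and y: "y \<in> W" "y < x"
    have "y \<noteq> p" "x \<noteq> p" using x y by auto
    then have "y \<in> S" using H x y unfolding down_closed_in_def by blast
    then show "y \<in> S \<inter> {..<p}" using x y by auto
  qed
next
  assume H: "down_closed_in (S \<inter> {..<p}) W"
  show "down_closed_in S (W - {p})" unfolding down_closed_in_def
  proof (intro ballI impI)
    fix x y assume x: "x \<in> S \<inter> (W - {p})" and y: "y \<in> W - {p}" "y < x"
    have "x < p" using x assms by force
    then show "y \<in> S" using H x y unfolding down_closed_in_def by auto
  qed
qed

lemma down_closed_in_shift: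
  assumes "W \<subseteq> {1..}"
  shows "down_closed_in S ((+) p ` W) \<longleftrightarrow> down_closed_in (shift_down p S) W"
proof
  assume H: "down_closed_in S ((+) p ` W)"
  show "down_closed_in (shift_down p S) W" unfolding down_closed_in_def
  proof (intro ballI impI)
    fix x y assume x: "x \<in> shift_down p S \<inter> W" and y: "y \<in> W" "y < x"
    have "p + x \<in> S \<inter> (+) p ` W" "p + y \<in> (+) p ` W" "p + y < p + x"
      using x y by (auto simp: shift_down_def add.commute)
    then have "p + y \<in> S" using H unfolding down_closed_in_def by blast
    then show "y \<in> shift_down p S" using y assms by (auto simp: shift_down_def add.commute)
  qed
next
  assume H: "down_closed_in (shift_down p S) W"
  show "down_closed_in S ((+) p ` W)" unfolding down_closed_in_def
  proof (intro ballI impI)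
    fix x y assume x: "x \<in> S \<inter> (+) p ` W" and y: "y \<in> (+) p ` W" "y < x"
    then obtain x' y' where xy: "x = p + x'" "y = p + y'" "x' \<in> W" "y' \<in> W" by auto
    have "x' \<in> shift_down p S" using x xy assms by (auto simp: shift_down_def add.commute)
    then have "y' \<in> shift_down p S" using H xy y unfolding down_closed_in_def by auto
    then show "y \<in> S" using xy by (auto simp: shift_down_def add.commute)
  qed
qed

lemma all_less_add_split:
  fixes m n :: nat
  shows "(\<forall>k<m + n. P k) \<longleftrightarrow> (\<forall>k<m. P k) \<and> (\<forall>j<n. P (m + j))"
proof (intro iffI conjI allI impI)
  fix k assume H: "(\<forall>k<m. P k) \<and> (\<forall>j<n. P (m + j))" and k: "k < m + n"
  show "P k"
  proof (cases "k < m")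
    case False
    define j where "j = k - m"
    have "k = m + j" "j < n" using False k by (auto simp: j_def)
    then show ?thesis using H by simp
  qed (use H in simp)
qed simp_all

lemma unimodal_append:
  assumes "composition \<alpha>" "composition \<beta>" "S \<subseteq> {1..<sum_list \<alpha> + sum_list \<beta>}"
  shows "unimodal (\<alpha> @ \<beta>) S \<longleftrightarrow>
    unimodal \<alpha> (S \<inter> {..<sum_list \<alpha>}) \<and> unimodal \<beta> (shift_down (sum_list \<alpha>) S)"
proof (cases "\<beta> = []")
  case True
  then have "S \<inter> {..<sum_list \<alpha>} = S" "shift_down (sum_list \<alpha>) S = {}"
    using assms(3) by (auto simp: shift_down_def)
  with True show ?thesis by (simp add: unimodal_def)
next
  case False
  let ?p = "sum_list \<alpha>"
  have "down_closed_in S (block (\<alpha> @ \<beta>) k - Sset (\<alpha> @ \<beta>)) \<longleftrightarrow>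
      down_closed_in (S \<inter> {..<?p}) (block \<alpha> k - Sset \<alpha>)" if "k < length \<alpha>" for k
  proof -
    have "block (\<alpha> @ \<beta>) k - Sset (\<alpha> @ \<beta>) = (block \<alpha> k - Sset \<alpha>) - {?p}"
      using that False block_subset[OF that] Sset_subset[OF assms(2)]
      by (auto simp: block_append_less Sset_append)
    moreover have "block \<alpha> k - Sset \<alpha> \<subseteq> {..?p}" using block_subset[OF that] by auto
    ultimately show ?thesis using down_closed_in_Diff_max by simp
  qed
  moreover have "down_closed_in S (block (\<alpha> @ \<beta>) (length \<alpha> + j) - Sset (\<alpha> @ \<beta>)) \<longleftrightarrow>
      down_closed_in (shift_down ?p S) (block \<beta> j - Sset \<beta>)" if "j < length \<beta>" for j
  proof -
    have "block (\<alpha> @ \<beta>) (length \<alpha> + j) - Sset (\<alpha> @ \<beta>) = (+) ?p ` (block \<beta> j - Sset \<beta>)"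
      using block_subset[OF that] Sset_subset[OF assms(1)]
      by (auto simp: block_append_shift Sset_append)
    moreover have "block \<beta> j - Sset \<beta> \<subseteq> {1..}" using block_subset[OF that] by auto
    ultimately show ?thesis using down_closed_in_shift by simp
  qed
  ultimately show ?thesis
    unfolding unimodal_iff_down_closed_in length_append all_less_add_split by simp
qed

lemma Diff_Sset_append:
  assumes "composition \<alpha>" "composition \<beta>" "S \<subseteq> {1..<sum_list \<alpha> + sum_list \<beta>}"
  shows "S - Sset (\<alpha> @ \<beta>) =
    (S \<inter> {..<sum_list \<alpha>} - Sset \<alpha>) \<union> (+) (sum_list \<alpha>) ` (shift_down (sum_list \<alpha>) S - Sset \<beta>)"
proof (rule set_eqI)
  fix x
  let ?p = "sum_list \<alpha>"
  have \<alpha>: "Sset \<alpha> \<subseteq> {1..<?p}" and \<beta>: "Sset \<beta> \<subseteq> {1..<sum_list \<beta>}"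
    using Sset_subset assms(1,2) by auto
  consider "x < ?p" | "x = ?p" | y where "x = ?p + y" "0 < y"
    by (metis less_imp_add_positive nat_neq_iff)
  then show "x \<in> S - Sset (\<alpha> @ \<beta>) \<longleftrightarrow>
      x \<in> (S \<inter> {..<?p} - Sset \<alpha>) \<union> (+) ?p ` (shift_down ?p S - Sset \<beta>)"
  proof cases
    case 1
    then show ?thesis using \<beta> by (auto simp: Sset_append)
  next
    case 2
    have "x \<in> S \<Longrightarrow> \<alpha> \<noteq> [] \<and> \<beta> \<noteq> []" using 2 assms(3) by auto
    then show ?thesis using 2 \<alpha> by (auto simp: Sset_append shift_down_def)
  next
    case 3
    then show ?thesis using \<alpha> by (auto simp: Sset_append shift_down_def add.commute)
  qed
qed

lemma finite_shift_down: "finite S \<Longrightarrow> finite (shift_down p S)"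
proof (rule finite_surj[of S _ "\<lambda>x. x - p"])
  show "shift_down p S \<subseteq> (\<lambda>x. x - p) ` S"
    unfolding shift_down_def by (auto intro: image_eqI[where x = "_ + p"])
qed

lemma card_Diff_Sset_append:
  assumes "composition \<alpha>" "composition \<beta>" "S \<subseteq> {1..<sum_list \<alpha> + sum_list \<beta>}"
  shows "card (S - Sset (\<alpha> @ \<beta>)) =
    card (S \<inter> {..<sum_list \<alpha>} - Sset \<alpha>) + card (shift_down (sum_list \<alpha>) S - Sset \<beta>)"
proof -
  have "finite S" using assms(3) finite_subset by blast
  then show ?thesis
    unfolding Diff_Sset_append[OF assms]
    by (subst card_Un_disjoint) (auto simp: card_image finite_shift_down)
qed

definition unimodal_weight :: "nat set \<Rightarrow> nat list \<Rightarrow> nat \<Rightarrow> real" where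
  "unimodal_weight S \<alpha> w = (if unimodal \<alpha> S then (-1) ^ card (S - Sset \<alpha>) / real w else 0)"

lemma unimodal_weight_append:
  assumes "composition \<alpha>" "composition \<beta>" "S \<subseteq> {1..<sum_list \<alpha> + sum_list \<beta>}"
  shows "unimodal_weight S (\<alpha> @ \<beta>) (v * w) =
    unimodal_weight (S \<inter> {..<sum_list \<alpha>}) \<alpha> v * unimodal_weight (shift_down (sum_list \<alpha>) S) \<beta> w"
  unfolding unimodal_weight_def unimodal_append[OF assms] card_Diff_Sset_append[OF assms]
  by (simp add: power_add)

lemma pi_comp_snoc: "pi_comp (\<alpha> @ [a]) = pi_comp \<alpha> * (sum_list \<alpha> + a)"
proof -
  have "pi_comp (\<alpha> @ [a]) = (\<Prod>i\<in>insert (Suc (length \<alpha>)) {1..length \<alpha>}. sum_list (take i (\<alpha> @ [a])))"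
    unfolding pi_comp_def by (simp add: atLeastAtMostSuc_conv)
  also have "\<dots> = (sum_list \<alpha> + a) * (\<Prod>i=1..length \<alpha>. sum_list (take i \<alpha>))"
    by (subst prod.insert) (auto intro!: prod.cong)
  finally show ?thesis by (simp add: pi_comp_def)
qed

lemma compositions_snoc:
  assumes "0 < m"
  shows "compositions m = (\<lambda>(d, \<alpha>). \<alpha> @ [m - d]) ` (SIGMA d:{..<m}. compositions d)"
proof (intro set_eqI iffI)
  fix \<gamma> assume \<gamma>: "\<gamma> \<in> compositions m"
  then have "\<gamma> \<noteq> []" using assms by (auto simp: mem_compositions_iff)
  then have split: "\<gamma> = butlast \<gamma> @ [last \<gamma>]" by simp
  with \<gamma> have "composition (butlast \<gamma>)" "0 < last \<gamma>" "sum_list (butlast \<gamma>) + last \<gamma> = m"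
    by (metis composition_append composition_Cons mem_compositions_iff sum_list_append
        sum_list.Cons sum_list.Nil add_0_right)+
  then show "\<gamma> \<in> (\<lambda>(d, \<alpha>). \<alpha> @ [m - d]) ` (SIGMA d:{..<m}. compositions d)"
    using split by (intro image_eqI[of _ _ "(sum_list (butlast \<gamma>), butlast \<gamma>)"])
      (auto simp: mem_compositions_iff)
qed (auto simp: mem_compositions_iff)

lemma inj_on_snoc_compositions: "inj_on (\<lambda>(d, \<alpha>). \<alpha> @ [m - d]) (SIGMA d:{..<m}. compositions d)"
  by (auto simp: inj_on_def mem_compositions_iff)

lemma unimodal_singleton_shift_down:
  assumes "T \<subseteq> {1..<m}"
  shows "unimodal [m - d] (shift_down d T) \<longleftrightarrow> (\<forall>x\<in>T. \<forall>y. d < y \<longrightarrow> y < x \<longrightarrow> y \<in> T)"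
proof -
  have "unimodal [m - d] (shift_down d T) \<longleftrightarrow> down_closed_in (shift_down d T) {1..m - d}"
    by (simp add: unimodal_iff_down_closed_in block_def)
  also have "\<dots> \<longleftrightarrow> (\<forall>x\<in>T. \<forall>y. d < y \<longrightarrow> y < x \<longrightarrow> y \<in> T)"
  proof
    assume H: "down_closed_in (shift_down d T) {1..m - d}"
    show "\<forall>x\<in>T. \<forall>y. d < y \<longrightarrow> y < x \<longrightarrow> y \<in> T"
    proof (intro ballI allI impI)
      fix x y assume "x \<in> T" "d < y" "y < x"
      then have "x - d \<in> shift_down d T \<inter> {1..m - d}" "y - d \<in> {1..m - d}" "y - d < x - d"
        using assms by (auto simp: shift_down_def)
      then have "y - d \<in> shift_down d T" using H unfolding down_closed_in_def by blast
      then show "y \<in> T" using \<open>d < y\<close> by (simp add: shift_down_def)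
    qed
  qed (auto simp: down_closed_in_def shift_down_def)
  finally show ?thesis .
qed

lemma card_shift_down: "finite T \<Longrightarrow> card (shift_down d T) = card {x\<in>T. d < x}"
  by (rule bij_betw_same_card[of "\<lambda>x. x + d"])
    (auto simp: bij_betw_def inj_on_def shift_down_def image_iff intro!: exI[of _ "_ - d"])

lemma unimodal_weight_last_part:
  assumes "T \<subseteq> {1..<m}"
  shows "unimodal_weight (shift_down d T) [m - d] m =
    (if \<forall>x\<in>T. \<forall>y. d < y \<longrightarrow> y < x \<longrightarrow> y \<in> T then (-1) ^ card {x\<in>T. d < x} / real m else 0)"
proof -
  have "finite T" using assms finite_subset by blast
  then show ?thesis
    unfolding unimodal_weight_def unimodal_singleton_shift_down[OF assms] by (auto simp: card_shift_down)
qed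

definition unimodal_sign_sum :: "nat \<Rightarrow> nat set \<Rightarrow> real" where
  "unimodal_sign_sum m T = (\<Sum>\<alpha>\<in>compositions m. unimodal_weight T \<alpha> (pi_comp \<alpha>))"

lemma unimodal_sign_sum_snoc:
  assumes "0 < m" "T \<subseteq> {1..<m}"
  shows "unimodal_sign_sum m T =
    (\<Sum>d<m. unimodal_weight (shift_down d T) [m - d] m * unimodal_sign_sum d (T \<inter> {..<d}))"
proof -
  have "unimodal_sign_sum m T =
      (\<Sum>(d, \<alpha>)\<in>(SIGMA d:{..<m}. compositions d). unimodal_weight T (\<alpha> @ [m - d]) (pi_comp (\<alpha> @ [m - d])))"
    unfolding unimodal_sign_sum_def compositions_snoc[OF assms(1)]
    by (subst sum.reindex[OF inj_on_snoc_compositions]) (simp add: case_prod_unfold)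
  also have "\<dots> = (\<Sum>d<m. \<Sum>\<alpha>\<in>compositions d. unimodal_weight T (\<alpha> @ [m - d]) (pi_comp (\<alpha> @ [m - d])))"
    by (rule sum.Sigma[symmetric]) (auto simp: finite_compositions)
  also have "\<dots> = (\<Sum>d<m. \<Sum>\<alpha>\<in>compositions d.
      unimodal_weight (T \<inter> {..<d}) \<alpha> (pi_comp \<alpha>) * unimodal_weight (shift_down d T) [m - d] m)"
  proof (intro sum.cong refl)
    fix d \<alpha> assume "d \<in> {..<m}" "\<alpha> \<in> compositions d"
    then show "unimodal_weight T (\<alpha> @ [m - d]) (pi_comp (\<alpha> @ [m - d])) =
        unimodal_weight (T \<inter> {..<d}) \<alpha> (pi_comp \<alpha>) * unimodal_weight (shift_down d T) [m - d] m"
      using unimodal_weight_append[of \<alpha> "[m - d]" T] assms(2)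
      by (auto simp: mem_compositions_iff pi_comp_snoc)
  qed
  finally show ?thesis by (simp add: unimodal_sign_sum_def sum_distrib_left mult.commute)
qed

lemma sum_last_part_weights_eq:
  assumes "0 < m" "T \<subseteq> {1..<m}"
  shows "(\<Sum>d<m. unimodal_weight (shift_down d T) [m - d] m * (if T \<inter> {..<d} = {} then 1 else 0)) =
    (if T = {} then 1 else 0)"
proof (cases "T = {}")
  case True
  then show ?thesis using assms(1) by (simp add: unimodal_weight_def unimodal_def shift_down_def)
next
  case False
  let ?closed = "\<lambda>d. \<forall>x\<in>T. \<forall>y. d < y \<longrightarrow> y < x \<longrightarrow> y \<in> T"
  let ?t = "\<lambda>d. unimodal_weight (shift_down d T) [m - d] m * (if T \<inter> {..<d} = {} then 1 else 0)"
  note weight = unimodal_weight_last_part[OF assms(2)]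
  have fin: "finite T" using assms(2) finite_subset by blast
  define a where "a = Min T"
  have a: "a \<in> T" "\<And>x. x \<in> T \<Longrightarrow> a \<le> x" using fin False by (auto simp: a_def)
  with assms(2) have "1 \<le> a" "a < m" by auto
  have "?t d = 0" if "d < m" "d \<noteq> a - 1" "d \<noteq> a" for d
  proof (cases "a < d")
    case False
    then have "d + 1 < a" "d + 1 \<notin> T" using that a(2) by fastforce+
    then have "\<not> ?closed d" using a(1) by auto
    then show ?thesis by (auto simp: weight)
  qed (use a(1) in auto)
  then have "(\<Sum>d<m. ?t d) = (\<Sum>d\<in>{a - 1, a}. ?t d)"
    by (intro sum.mono_neutral_right) (use \<open>a < m\<close> in auto)
  also have "\<dots> = ?t (a - 1) + ?t a" using \<open>1 \<le> a\<close> by simp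
  also have "\<dots> = 0"
  proof -
    have "T \<inter> {..<a - 1} = {}" "T \<inter> {..<a} = {}" using a(2) by fastforce+
    moreover have "?closed (a - 1) \<longleftrightarrow> ?closed a"
    proof
      assume closed: "?closed a"
      show "?closed (a - 1)"
      proof (intro ballI allI impI)
        fix x y assume "x \<in> T" "a - 1 < y" "y < x"
        then consider "y = a" | "a < y" by linarith
        then show "y \<in> T" using closed a(1) \<open>x \<in> T\<close> \<open>y < x\<close> by cases auto
      qed
    qed auto
    moreover have "{x\<in>T. a - 1 < x} = insert a {x\<in>T. a < x}" using a \<open>1 \<le> a\<close> by force
    then have "card {x\<in>T. a - 1 < x} = Suc (card {x\<in>T. a < x})" using fin by simp
    ultimately show ?thesis by (auto simp: weight)
  qed
  finally show ?thesis using False by simp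
qed

lemma unimodal_sign_sum_eq:
  "T \<subseteq> {1..<m} \<Longrightarrow> unimodal_sign_sum m T = (if T = {} then 1 else 0)"
proof (induction m arbitrary: T rule: less_induct)
  case (less m)
  show ?case
  proof (cases "m = 0")
    case True
    then show ?thesis using less.prems
      by (simp add: unimodal_sign_sum_def compositions_0 unimodal_weight_def unimodal_def pi_comp_def)
  next
    case False
    have "unimodal_sign_sum m T =
        (\<Sum>d<m. unimodal_weight (shift_down d T) [m - d] m * unimodal_sign_sum d (T \<inter> {..<d}))"
      using unimodal_sign_sum_snoc less.prems False by simp
    also have "\<dots> =
        (\<Sum>d<m. unimodal_weight (shift_down d T) [m - d] m * (if T \<inter> {..<d} = {} then 1 else 0))"
    proof (intro sum.cong refl)
      fix d assume "d \<in> {..<m}"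
      moreover have "T \<inter> {..<d} \<subseteq> {1..<d}" using less.prems by auto
      ultimately show "unimodal_weight (shift_down d T) [m - d] m * unimodal_sign_sum d (T \<inter> {..<d}) =
          unimodal_weight (shift_down d T) [m - d] m * (if T \<inter> {..<d} = {} then 1 else 0)"
        using less.IH by simp
    qed
    also have "\<dots> = (if T = {} then 1 else 0)"
      using sum_last_part_weights_eq[OF _ less.prems] False by simp
    finally show ?thesis .
  qed
qed

lemma upt_length_append:
  "[0..<length (\<alpha> @ \<beta>)] = [0..<length \<alpha>] @ map (\<lambda>j. j + length \<alpha>) [0..<length \<beta>]"
proof -
  have "[0..<length \<alpha> + length \<beta>] = [0..<length \<alpha>] @ [length \<alpha>..<length \<alpha> + length \<beta>]"
    by (rule upt_add_eq_append) simp
  then show ?thesis by (simp add: map_add_upt add.commute)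
qed

lemma refine_part_append_Cons_0:
  assumes "\<alpha> \<in> compositions a" "composition \<gamma>"
  shows "refine_part (\<alpha> @ \<gamma>) (a # \<beta>) 0 = \<alpha>"
proof -
  have \<alpha>: "composition \<alpha>" "sum_list \<alpha> = a" using assms(1) by (auto simp: mem_compositions_iff)
  have inside: "block (\<alpha> @ \<gamma>) j \<subseteq> block (a # \<beta>) 0" if "j < length \<alpha>" for j
    using block_subset[OF that] \<alpha>(2) by (simp add: block_append_less[OF that] block_Cons_0)
  have outside: "\<not> block (\<alpha> @ \<gamma>) (j + length \<alpha>) \<subseteq> block (a # \<beta>) 0" if j: "j < length \<gamma>" for j
  proof
    assume sub: "block (\<alpha> @ \<gamma>) (j + length \<alpha>) \<subseteq> block (a # \<beta>) 0"
    obtain x where x: "x \<in> block \<gamma> j" using block_nonempty[OF assms(2) j] by auto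
    then have "a + x \<in> {1..a}" "1 \<le> x" using sub block_subset[OF j]
      by (auto simp: block_append_shift[of \<alpha>, simplified add.commute] \<alpha>(2) block_Cons_0)
    then show False by simp
  qed
  have "refine_part (\<alpha> @ \<gamma>) (a # \<beta>) 0 = map (\<lambda>j. (\<alpha> @ \<gamma>) ! j) [0..<length \<alpha>]"
    unfolding refine_part_def upt_length_append filter_append
    using inside outside by (simp add: filter_map o_def)
  also have "\<dots> = \<alpha>" by (rule nth_equalityI) (simp_all add: nth_append)
  finally show ?thesis .
qed

lemma refine_part_append_Cons_Suc:
  assumes "\<alpha> \<in> compositions a"
  shows "refine_part (\<alpha> @ \<gamma>) (a # \<beta>) (Suc i) = refine_part \<gamma> \<beta> i"
proof -
  have \<alpha>: "composition \<alpha>" "sum_list \<alpha> = a" using assms by (auto simp: mem_compositions_iff)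
  have outside: "\<not> block (\<alpha> @ \<gamma>) j \<subseteq> block (a # \<beta>) (Suc i)" if j: "j < length \<alpha>" for j
  proof
    assume sub: "block (\<alpha> @ \<gamma>) j \<subseteq> block (a # \<beta>) (Suc i)"
    obtain x where x: "x \<in> block \<alpha> j" using block_nonempty[OF \<alpha>(1) j] by auto
    then have "x \<le> a" using block_subset[OF j] \<alpha>(2) by auto
    moreover have "x \<in> (+) a ` block \<beta> i"
      using sub x by (auto simp: block_append_less[OF j] block_Cons_Suc)
    ultimately show False by (auto simp: block_def)
  qed
  have shifted: "block (\<alpha> @ \<gamma>) (j + length \<alpha>) \<subseteq> block (a # \<beta>) (Suc i) \<longleftrightarrow>
      block \<gamma> j \<subseteq> block \<beta> i" for j
    unfolding block_append_shift[of \<alpha>, simplified add.commute] block_Cons_Suc \<alpha>(2)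
    by (rule inj_image_subset_iff) (simp add: inj_on_def)
  show ?thesis
    unfolding refine_part_def upt_length_append filter_append
    using outside by (simp add: filter_map o_def shifted nth_append)
qed

lemma pi_pair_append_Cons:
  assumes "\<alpha> \<in> compositions a" "composition \<gamma>"
  shows "pi_pair (\<alpha> @ \<gamma>) (a # \<beta>) = pi_comp \<alpha> * pi_pair \<gamma> \<beta>"
  unfolding pi_pair_def length_Cons prod.lessThan_Suc_shift
  by (simp add: refine_part_append_Cons_0[OF assms] refine_part_append_Cons_Suc[OF assms(1)])

lemma comp_le_append_Cons:
  assumes "\<alpha> \<in> compositions a" "0 < a" "composition \<gamma>" "composition \<beta>" "sum_list \<gamma> = sum_list \<beta>"
  shows "comp_le (\<alpha> @ \<gamma>) (a # \<beta>) \<longleftrightarrow> comp_le \<gamma> \<beta>"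
proof -
  have \<alpha>: "\<alpha> \<noteq> []" "sum_list \<alpha> = a" "Sset \<alpha> \<subseteq> {..<a}"
    using assms(1,2) Sset_subset[of \<alpha>] by (auto simp: mem_compositions_iff)
  have "\<gamma> = [] \<longleftrightarrow> \<beta> = []"
    using assms(3-5) composition_sum_list_eq_0_iff by metis
  moreover have "(+) a ` Sset \<gamma> \<subseteq> {a<..}" "(+) a ` Sset \<beta> \<subseteq> {a<..}"
    using Sset_subset assms(3,4) by fastforce+
  ultimately have "comp_le (\<alpha> @ \<gamma>) (a # \<beta>) \<longleftrightarrow> (+) a ` Sset \<beta> \<subseteq> (+) a ` Sset \<gamma>"
    unfolding comp_le_def Sset_Cons Sset_append using \<alpha> by (auto 0 3 simp: subset_eq)
  also have "\<dots> \<longleftrightarrow> comp_le \<gamma> \<beta>"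
    unfolding comp_le_def by (rule inj_image_subset_iff) (simp add: inj_on_def)
  finally show ?thesis .
qed

lemma compositions_same_sum_prefix_eq:
  "composition \<alpha> \<Longrightarrow> composition \<alpha>' \<Longrightarrow> sum_list \<alpha> = sum_list \<alpha>' \<Longrightarrow> \<alpha> @ \<gamma> = \<alpha>' @ \<gamma>' \<Longrightarrow> \<alpha> = \<alpha>'"
proof (induction \<alpha> arbitrary: \<alpha>')
  case Nil
  then show ?case using composition_sum_list_eq_0_iff[of \<alpha>'] by simp
next
  case (Cons x \<alpha>)
  then obtain \<alpha>'' where "\<alpha>' = x # \<alpha>''" by (cases \<alpha>') auto
  with Cons show ?case by auto
qed

lemma inj_on_append_compositions: "inj_on (\<lambda>(\<alpha>, \<gamma>). \<alpha> @ \<gamma>) (compositions a \<times> X)"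
proof (rule inj_onI, clarify)
  fix \<alpha> \<gamma> \<alpha>' \<gamma>' assume "\<alpha> \<in> compositions a" "\<alpha>' \<in> compositions a" "\<alpha> @ \<gamma> = \<alpha>' @ \<gamma>'"
  moreover from this have "\<alpha> = \<alpha>'"
    using compositions_same_sum_prefix_eq by (auto simp: mem_compositions_iff)
  ultimately show "\<alpha> = \<alpha>' \<and> \<gamma> = \<gamma>'" by simp
qed

lemma refinements_Cons:
  assumes "a # \<beta> \<in> compositions n"
  shows "{\<alpha>. \<alpha> \<in> compositions n \<and> comp_le \<alpha> (a # \<beta>)} =
    (\<lambda>(\<alpha>, \<gamma>). \<alpha> @ \<gamma>) ` (compositions a \<times> {\<gamma>. \<gamma> \<in> compositions (n - a) \<and> comp_le \<gamma> \<beta>})"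
    (is "?L = (\<lambda>(\<alpha>, \<gamma>). \<alpha> @ \<gamma>) ` (compositions a \<times> ?R)")
proof -
  have a: "0 < a" and \<beta>: "composition \<beta>" and n: "n = a + sum_list \<beta>"
    using assms by (auto simp: mem_compositions_iff)
  show ?thesis
  proof (intro set_eqI iffI)
    fix \<alpha> assume "\<alpha> \<in> ?L"
    then have \<alpha>: "composition \<alpha>" "sum_list \<alpha> = n" "comp_le \<alpha> (a # \<beta>)"
      by (auto simp: mem_compositions_iff)
    obtain i where i: "sum_list (take i \<alpha>) = a"
    proof (cases "\<beta> = []")
      case True
      then show ?thesis using that[of "length \<alpha>"] \<alpha>(2) n by simp
    next
      case False
      then have "a \<in> Sset \<alpha>" using \<alpha>(3) by (auto simp: comp_le_def Sset_Cons)
      then show ?thesis using that unfolding Sset_conv_image by auto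
    qed
    have "sum_list \<alpha> = sum_list (take i \<alpha>) + sum_list (drop i \<alpha>)"
      by (metis append_take_drop_id sum_list_append)
    then have "take i \<alpha> \<in> compositions a" "drop i \<alpha> \<in> compositions (n - a)"
      using \<alpha>(1,2) i by (auto simp: mem_compositions_iff composition_def dest: in_set_takeD in_set_dropD)
    moreover from this have "comp_le (drop i \<alpha>) \<beta>"
      using comp_le_append_Cons[of "take i \<alpha>" a "drop i \<alpha>" \<beta>] \<alpha>(3) a \<beta> n
      by (auto simp: mem_compositions_iff)
    ultimately show "\<alpha> \<in> (\<lambda>(\<alpha>, \<gamma>). \<alpha> @ \<gamma>) ` (compositions a \<times> ?R)"
      by (intro image_eqI[of _ _ "(take i \<alpha>, drop i \<alpha>)"]) auto
  next
    fix \<alpha>' assume "\<alpha>' \<in> (\<lambda>(\<alpha>, \<gamma>). \<alpha> @ \<gamma>) ` (compositions a \<times> ?R)"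
    then obtain \<alpha> \<gamma> where "\<alpha>' = \<alpha> @ \<gamma>" "\<alpha> \<in> compositions a" "\<gamma> \<in> compositions (n - a)" "comp_le \<gamma> \<beta>"
      by auto
    then show "\<alpha>' \<in> ?L"
      using comp_le_append_Cons[of \<alpha> a \<gamma> \<beta>] a \<beta> n by (auto simp: mem_compositions_iff)
  qed
qed

lemma subset_Sset_Cons:
  assumes "composition \<beta>" "S \<subseteq> {1..<a + sum_list \<beta>}"
  shows "S \<subseteq> Sset (a # \<beta>) \<longleftrightarrow> S \<inter> {..<a} = {} \<and> shift_down a S \<subseteq> Sset \<beta>"
proof
  assume S: "S \<subseteq> Sset (a # \<beta>)"
  then show "S \<inter> {..<a} = {} \<and> shift_down a S \<subseteq> Sset \<beta>"
    by (auto simp: Sset_Cons shift_down_def add.commute split: if_splits)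
next
  assume S: "S \<inter> {..<a} = {} \<and> shift_down a S \<subseteq> Sset \<beta>"
  show "S \<subseteq> Sset (a # \<beta>)"
  proof
    fix x assume x: "x \<in> S"
    then have "a \<le> x" using S by auto
    then consider "x = a" | y where "x = a + y" "0 < y"
      by (metis le_neq_implies_less less_imp_add_positive)
    then show "x \<in> Sset (a # \<beta>)"
    proof cases
      case 1
      then have "\<beta> \<noteq> []" using x assms(2) by auto
      with 1 show ?thesis by (simp add: Sset_Cons)
    next
      case 2
      then have "y \<in> Sset \<beta>" using x S by (auto simp: shift_down_def add.commute)
      with 2 show ?thesis by (simp add: Sset_Cons)
    qed
  qed
qed

lemma refinement_weight_sum_Cons:
  assumes "a # \<beta> \<in> compositions n" "S \<subseteq> {1..<n}"
  shows "(\<Sum>\<alpha> | \<alpha> \<in> compositions n \<and> comp_le \<alpha> (a # \<beta>). unimodal_weight S \<alpha> (pi_pair \<alpha> (a # \<beta>))) =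
    unimodal_sign_sum a (S \<inter> {..<a}) *
    (\<Sum>\<gamma> | \<gamma> \<in> compositions (n - a) \<and> comp_le \<gamma> \<beta>. unimodal_weight (shift_down a S) \<gamma> (pi_pair \<gamma> \<beta>))"
proof -
  have n: "n = a + sum_list \<beta>" using assms(1) by (auto simp: mem_compositions_iff)
  let ?R = "{\<gamma>. \<gamma> \<in> compositions (n - a) \<and> comp_le \<gamma> \<beta>}"
  have "(\<Sum>\<alpha> | \<alpha> \<in> compositions n \<and> comp_le \<alpha> (a # \<beta>). unimodal_weight S \<alpha> (pi_pair \<alpha> (a # \<beta>))) =
      (\<Sum>(\<alpha>, \<gamma>)\<in>compositions a \<times> ?R. unimodal_weight S (\<alpha> @ \<gamma>) (pi_pair (\<alpha> @ \<gamma>) (a # \<beta>)))"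
    unfolding refinements_Cons[OF assms(1)]
    by (subst sum.reindex[OF inj_on_append_compositions]) (simp add: case_prod_unfold)
  also have "\<dots> = (\<Sum>(\<alpha>, \<gamma>)\<in>compositions a \<times> ?R.
      unimodal_weight (S \<inter> {..<a}) \<alpha> (pi_comp \<alpha>) * unimodal_weight (shift_down a S) \<gamma> (pi_pair \<gamma> \<beta>))"
  proof (intro sum.cong refl, clarify)
    fix \<alpha> \<gamma> assume "\<alpha> \<in> compositions a" "\<gamma> \<in> compositions (n - a)"
    then show "unimodal_weight S (\<alpha> @ \<gamma>) (pi_pair (\<alpha> @ \<gamma>) (a # \<beta>)) =
        unimodal_weight (S \<inter> {..<a}) \<alpha> (pi_comp \<alpha>) * unimodal_weight (shift_down a S) \<gamma> (pi_pair \<gamma> \<beta>)"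
      using unimodal_weight_append[of \<alpha> \<gamma> S] pi_pair_append_Cons[of \<alpha> a \<gamma> \<beta>] assms(2) n
      by (auto simp: mem_compositions_iff)
  qed
  finally show ?thesis by (simp add: unimodal_sign_sum_def sum_product sum.cartesian_product)
qed

lemma refinement_weight_sum_eq:
  "\<beta> \<in> compositions n \<Longrightarrow> S \<subseteq> {1..<n} \<Longrightarrow>
   (\<Sum>\<alpha> | \<alpha> \<in> compositions n \<and> comp_le \<alpha> \<beta>. unimodal_weight S \<alpha> (pi_pair \<alpha> \<beta>)) =
   (if S \<subseteq> Sset \<beta> then 1 else 0)"
proof (induction \<beta> arbitrary: n S)
  case Nil
  then have "n = 0" "S = {}" by (auto simp: mem_compositions_iff)
  then show ?case
    by (simp add: compositions_0 comp_le_def unimodal_weight_def unimodal_def pi_pair_def)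
next
  case (Cons a \<beta>)
  have \<beta>: "\<beta> \<in> compositions (n - a)" and n: "n = a + sum_list \<beta>"
    using Cons.prems(1) by (auto simp: mem_compositions_iff)
  have "unimodal_sign_sum a (S \<inter> {..<a}) = (if S \<inter> {..<a} = {} then 1 else 0)"
    by (rule unimodal_sign_sum_eq) (use Cons.prems(2) in auto)
  moreover have "(\<Sum>\<gamma> | \<gamma> \<in> compositions (n - a) \<and> comp_le \<gamma> \<beta>.
      unimodal_weight (shift_down a S) \<gamma> (pi_pair \<gamma> \<beta>)) = (if shift_down a S \<subseteq> Sset \<beta> then 1 else 0)"
    by (rule Cons.IH[OF \<beta>]) (use Cons.prems(2) n in \<open>auto simp: shift_down_def\<close>)
  ultimately show ?case
    using refinement_weight_sum_Cons[OF Cons.prems] subset_Sset_Cons[of \<beta> S a] Cons.prems n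
    by (auto simp: mem_compositions_iff)
qed

definition support_list :: "(nat \<Rightarrow> nat) \<Rightarrow> nat list" where
  "support_list e = sorted_list_of_set {v. e v \<noteq> 0}"

definition exponent_comp :: "(nat \<Rightarrow> nat) \<Rightarrow> nat list" where
  "exponent_comp e = map e (support_list e)"

lemma support_list:
  assumes "finite {v. e v \<noteq> 0}"
  shows "sorted_wrt (<) (support_list e)" "set (support_list e) = {v. e v \<noteq> 0}"
  using assms by (simp_all add: support_list_def)

lemma composition_exponent_comp: "finite {v. e v \<noteq> 0} \<Longrightarrow> composition (exponent_comp e)"
  by (auto simp: exponent_comp_def composition_def support_list)

lemma sum_nth_indicator_nth:
  assumes "distinct xs" "i < length xs"
  shows "(\<Sum>k<length xs. if xs ! k = xs ! i then c k else 0) = (c i :: nat)"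
proof -
  have "(\<Sum>k<length xs. if xs ! k = xs ! i then c k else 0) = (\<Sum>k<length xs. if k = i then c k else 0)"
    by (rule sum.cong) (use assms in \<open>auto simp: nth_eq_iff_index_eq\<close>)
  then show ?thesis using assms(2) by simp
qed

lemma sum_nth_indicator_notin:
  "v \<notin> set xs \<Longrightarrow> (\<Sum>k<length xs. if xs ! k = v then c k else 0) = (0 :: nat)"
  by (auto intro!: sum.neutral simp: in_set_conv_nth)

lemma exponents_of_positions_iff:
  assumes "distinct is" "length is = length \<beta>" "composition \<beta>"
  shows "(\<forall>v. e v = (\<Sum>k<length \<beta>. if is ! k = v then \<beta> ! k else 0)) \<longleftrightarrow>
    set is = {v. e v \<noteq> 0} \<and> map e is = \<beta>"
proof
  assume e: "\<forall>v. e v = (\<Sum>k<length \<beta>. if is ! k = v then \<beta> ! k else 0)"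
  then have nth: "e (is ! i) = \<beta> ! i" if "i < length is" for i
    using sum_nth_indicator_nth[OF assms(1) that] assms(2) by simp
  have "v \<in> set is" if "e v \<noteq> 0" for v
  proof (rule ccontr)
    assume "v \<notin> set is"
    then have "e v = 0" using e sum_nth_indicator_notin[of v "is" "(!) \<beta>"] assms(2) by simp
    with that show False by simp
  qed
  moreover have "0 < \<beta> ! i" if "i < length is" for i
    using assms(2,3) that by (simp add: composition_def)
  ultimately have "set is = {v. e v \<noteq> 0}"
    using nth assms(2) by (auto simp: in_set_conv_nth)
  moreover have "map e is = \<beta>"
    using nth assms(2) by (intro nth_equalityI) simp_all
  ultimately show "set is = {v. e v \<noteq> 0} \<and> map e is = \<beta>" ..
next
  assume "set is = {v. e v \<noteq> 0} \<and> map e is = \<beta>"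
  then have e: "set is = {v. e v \<noteq> 0}" "map e is = \<beta>" by auto
  show "\<forall>v. e v = (\<Sum>k<length \<beta>. if is ! k = v then \<beta> ! k else 0)"
  proof
    fix v
    show "e v = (\<Sum>k<length \<beta>. if is ! k = v then \<beta> ! k else 0)"
    proof (cases "v \<in> set is")
      case True
      then obtain i where i: "i < length is" "v = is ! i" by (auto simp: in_set_conv_nth)
      then have "e v = \<beta> ! i" using e(2) by auto
      then show ?thesis using sum_nth_indicator_nth[OF assms(1) i(1), of "(!) \<beta>"] i(2) assms(2) by simp
    next
      case False
      then show ?thesis using sum_nth_indicator_notin[OF False, of "(!) \<beta>"] e(1) assms(2) by auto
    qed
  qed
qed

lemma M_coeff_eq:
  assumes "composition \<beta>" "finite {v. e v \<noteq> 0}"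
  shows "M_coeff \<beta> e = (if \<beta> = exponent_comp e then 1 else 0)"
proof -
  have "{is. length is = length \<beta> \<and> sorted_wrt (<) is \<and>
      (\<forall>v. e v = (\<Sum>k<length \<beta>. if is ! k = v then \<beta> ! k else 0))} =
      (if \<beta> = exponent_comp e then {support_list e} else {})"
  proof (intro set_eqI iffI)
    fix "is" assume "is \<in> {is. length is = length \<beta> \<and> sorted_wrt (<) is \<and>
      (\<forall>v. e v = (\<Sum>k<length \<beta>. if is ! k = v then \<beta> ! k else 0))}"
    then have l: "length is = length \<beta>" and "sorted_wrt (<) is"
      and "\<forall>v. e v = (\<Sum>k<length \<beta>. if is ! k = v then \<beta> ! k else 0)" by auto
    then have "sorted_wrt (<) is" "set is = {v. e v \<noteq> 0}" "map e is = \<beta>"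
      using exponents_of_positions_iff[OF _ l assms(1)] by (simp_all add: strict_sorted_iff)
    moreover from this have "is = support_list e"
      using support_list[OF assms(2)]
      by (intro sorted_distinct_set_unique) (simp_all add: strict_sorted_iff)
    ultimately show "is \<in> (if \<beta> = exponent_comp e then {support_list e} else {})"
      by (simp add: exponent_comp_def)
  next
    fix "is" assume "is \<in> (if \<beta> = exponent_comp e then {support_list e} else {})"
    then have "is = support_list e" "\<beta> = map e is" by (auto simp: exponent_comp_def split: if_splits)
    then show "is \<in> {is. length is = length \<beta> \<and> sorted_wrt (<) is \<and>
      (\<forall>v. e v = (\<Sum>k<length \<beta>. if is ! k = v then \<beta> ! k else 0))}"
      using exponents_of_positions_iff[of "is" \<beta> e] assms(1) support_list[OF assms(2)]
      by (simp add: strict_sorted_iff)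
  qed
  then show ?thesis by (simp add: M_coeff_def)
qed

definition monomial_word :: "(nat \<Rightarrow> nat) \<Rightarrow> nat list \<Rightarrow> nat list" where
  "monomial_word c ws = concat (map (\<lambda>v. replicate (c v) v) ws)"

lemma monomial_word_Cons: "monomial_word c (w # ws) = replicate (c w) w @ monomial_word c ws"
  by (simp add: monomial_word_def)

lemma count_list_replicate: "count_list (replicate n w) v = (if w = v then n else 0)"
  by (induction n) auto

lemma sorted_monomial_word: "sorted ws \<Longrightarrow> sorted (monomial_word c ws)"
  by (induction ws) (auto simp: monomial_word_def sorted_append)

lemma count_list_monomial_word:
  "distinct ws \<Longrightarrow> count_list (monomial_word c ws) v = (if v \<in> set ws then c v else 0)"
  by (induction ws) (auto simp: monomial_word_def count_list_replicate)

lemma length_monomial_word: "length (monomial_word c ws) = sum_list (map c ws)"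
  by (induction ws) (auto simp: monomial_word_def)

lemma monomial_word_ascent_iff:
  assumes "sorted_wrt (<) ws" "\<forall>w\<in>set ws. 0 < c w" "1 \<le> i" "i < length (monomial_word c ws)"
  shows "monomial_word c ws ! (i - 1) < monomial_word c ws ! i \<longleftrightarrow> i \<in> Sset (map c ws)"
  using assms
proof (induction ws arbitrary: i)
  case Nil
  then show ?case by (simp add: monomial_word_def)
next
  case (Cons w ws)
  let ?u = "monomial_word c ws"
  have "0 < c w" and len: "i < c w + length ?u"
    using Cons.prems by (simp_all add: monomial_word_Cons)
  have Sset: "Sset (map c (w # ws)) = (if ws \<noteq> [] then {c w} else {}) \<union> (+) (c w) ` Sset (map c ws)"
    by (simp add: Sset_Cons)
  have "Sset (map c ws) \<subseteq> {1..}"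
    using Sset_subset[of "map c ws"] Cons.prems(2) by (auto simp: composition_def)
  consider "i < c w" | "i = c w" | "c w < i" by linarith
  then show ?case
  proof cases
    case 1
    then have "monomial_word c (w # ws) ! (i - 1) = w" "monomial_word c (w # ws) ! i = w"
      by (simp_all add: monomial_word_Cons nth_append less_imp_diff_less)
    moreover have "i \<notin> Sset (map c (w # ws))"
      using 1 \<open>Sset (map c ws) \<subseteq> {1..}\<close> unfolding Sset by auto
    ultimately show ?thesis by simp
  next
    case 2
    with len obtain w' ws' where ws: "ws = w' # ws'" by (cases ws) (auto simp: monomial_word_def)
    with Cons.prems(1,2) have "w < w'" "0 < c w'" by auto
    moreover have "monomial_word c (w # ws) ! (i - 1) = w"
      using 2 \<open>0 < c w\<close> by (simp add: monomial_word_Cons nth_append)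
    moreover have "monomial_word c (w # ws) ! i = w'"
      using 2 ws \<open>0 < c w'\<close> by (simp add: monomial_word_Cons nth_append)
    moreover have "i \<in> Sset (map c (w # ws))" using 2 ws unfolding Sset by simp
    ultimately show ?thesis by simp
  next
    case 3
    define j where "j = i - c w"
    have j: "i = c w + j" "1 \<le> j" "j < length ?u" using 3 len by (auto simp: j_def)
    then have "?u ! (j - 1) < ?u ! j \<longleftrightarrow> j \<in> Sset (map c ws)"
      using Cons.IH[OF _ _ j(2,3)] Cons.prems(1,2) by simp
    moreover have "monomial_word c (w # ws) ! (i - 1) = ?u ! (j - 1)"
      "monomial_word c (w # ws) ! i = ?u ! j"
      using j by (auto simp: monomial_word_Cons nth_append)
    moreover have "i \<in> Sset (map c (w # ws)) \<longleftrightarrow> j \<in> Sset (map c ws)"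
      using j unfolding Sset by auto
    ultimately show ?thesis by simp
  qed
qed

lemma F_coeff_eq:
  assumes "finite {v. e v \<noteq> 0}" "S \<subseteq> {1..n-1}"
  shows "F_coeff n S e = (if sum_list (exponent_comp e) = n \<and> S \<subseteq> Sset (exponent_comp e) then 1 else 0)"
proof -
  let ?u = "monomial_word e (support_list e)"
  have supp: "sorted (support_list e)" "distinct (support_list e)" "set (support_list e) = {v. e v \<noteq> 0}"
    using support_list[OF assms(1)] by (simp_all add: strict_sorted_iff)
  have counts: "count_list ?u v = e v" for v
    using count_list_monomial_word[OF supp(2)] supp(3) by simp
  have unique: "js = ?u" if "sorted js" "\<forall>v. count_list js v = e v" for js
  proof -
    have "mset js = mset ?u" using that counts by (simp add: multiset_eq_iff count_mset)
    then have "sort ?u = js" using that(1) by (metis properties_for_sort)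
    then show ?thesis using sorted_monomial_word[OF supp(1)] by (simp add: sorted_sort_id)
  qed
  have length: "length ?u = sum_list (exponent_comp e)"
    by (simp add: length_monomial_word exponent_comp_def)
  have ascents: "(\<forall>i\<in>S. ?u ! (i - 1) < ?u ! i) \<longleftrightarrow> S \<subseteq> Sset (exponent_comp e)" if "length ?u = n"
  proof -
    have "?u ! (i - 1) < ?u ! i \<longleftrightarrow> i \<in> Sset (exponent_comp e)" if "i \<in> S" for i
    proof -
      have "1 \<le> i" "i < length ?u" using subsetD[OF assms(2) that] \<open>length ?u = n\<close> by auto
      then show ?thesis unfolding exponent_comp_def using support_list[OF assms(1)]
        by (intro monomial_word_ascent_iff) auto
    qed
    then show ?thesis by blast
  qed
  have "{js. length js = n \<and> sorted js \<and> (\<forall>i\<in>S. js ! (i - 1) < js ! i) \<and> (\<forall>v. count_list js v = e v)} =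
      (if sum_list (exponent_comp e) = n \<and> S \<subseteq> Sset (exponent_comp e) then {?u} else {})"
    (is "?F = ?R")
  proof (intro set_eqI iffI)
    fix js assume "js \<in> ?F"
    then have "js = ?u" "length ?u = n" "\<forall>i\<in>S. ?u ! (i - 1) < ?u ! i" using unique by auto
    then show "js \<in> ?R" using length ascents by auto
  next
    fix js assume "js \<in> ?R"
    then have "js = ?u" "length ?u = n" "S \<subseteq> Sset (exponent_comp e)"
      using length by (auto split: if_splits)
    then show "js \<in> ?F" using ascents counts sorted_monomial_word[OF supp(1)] by auto
  qed
  then show ?thesis by (simp add: F_coeff_def)
qed

lemma z_pos: "composition \<alpha> \<Longrightarrow> 0 < z \<alpha>"
  unfolding z_def by (auto intro!: prod_pos simp: composition_def)

lemma Psi_coeff_div_z: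
  assumes "\<alpha> \<in> compositions n" "finite {v. e v \<noteq> 0}"
  shows "Psi_coeff \<alpha> e / real (z \<alpha>) =
    (if exponent_comp e \<in> compositions n \<and> comp_le \<alpha> (exponent_comp e)
     then 1 / real (pi_pair \<alpha> (exponent_comp e)) else 0)"
proof -
  have \<alpha>: "composition \<alpha>" "sum_list \<alpha> = n" using assms(1) by (auto simp: mem_compositions_iff)
  have "Psi_coeff \<alpha> e / real (z \<alpha>) =
      (\<Sum>\<beta> | \<beta> \<in> compositions n \<and> comp_le \<alpha> \<beta>. M_coeff \<beta> e / real (pi_pair \<alpha> \<beta>))"
    using z_pos[OF \<alpha>(1)] by (simp add: Psi_coeff_def \<alpha>(2))
  also have "\<dots> = (\<Sum>\<beta> | \<beta> \<in> compositions n \<and> comp_le \<alpha> \<beta>.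
      if \<beta> = exponent_comp e then 1 / real (pi_pair \<alpha> \<beta>) else 0)"
    by (intro sum.cong refl) (auto simp: M_coeff_eq[OF _ assms(2)] mem_compositions_iff)
  also have "\<dots> = (if exponent_comp e \<in> compositions n \<and> comp_le \<alpha> (exponent_comp e)
      then 1 / real (pi_pair \<alpha> (exponent_comp e)) else 0)"
    by (simp add: sum.delta finite_compositions)
  finally show ?thesis .
qed

lemma sum_unimodal_Psi_coeff:
  assumes "finite {v. e v \<noteq> 0}"
  shows "(\<Sum>\<alpha> | \<alpha> \<in> compositions n \<and> unimodal \<alpha> S.
      Psi_coeff \<alpha> e / real (z \<alpha>) * (-1) ^ card (S - Sset \<alpha>)) =
    (if exponent_comp e \<in> compositions n
     then \<Sum>\<alpha> | \<alpha> \<in> compositions n \<and> comp_le \<alpha> (exponent_comp e).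
       unimodal_weight S \<alpha> (pi_pair \<alpha> (exponent_comp e))
     else 0)"
proof -
  let ?\<beta> = "exponent_comp e"
  have "(\<Sum>\<alpha> | \<alpha> \<in> compositions n \<and> unimodal \<alpha> S.
      Psi_coeff \<alpha> e / real (z \<alpha>) * (-1) ^ card (S - Sset \<alpha>)) =
    (\<Sum>\<alpha>\<in>compositions n. if unimodal \<alpha> S then Psi_coeff \<alpha> e / real (z \<alpha>) * (-1) ^ card (S - Sset \<alpha>) else 0)"
    by (rule sum.inter_filter[OF finite_compositions])
  also have "\<dots> = (\<Sum>\<alpha>\<in>compositions n.
      if ?\<beta> \<in> compositions n \<and> comp_le \<alpha> ?\<beta> then unimodal_weight S \<alpha> (pi_pair \<alpha> ?\<beta>) else 0)"
    by (intro sum.cong refl) (simp add: Psi_coeff_div_z[OF _ assms] unimodal_weight_def)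
  also have "\<dots> = (if ?\<beta> \<in> compositions n
      then \<Sum>\<alpha> | \<alpha> \<in> compositions n \<and> comp_le \<alpha> ?\<beta>. unimodal_weight S \<alpha> (pi_pair \<alpha> ?\<beta>) else 0)"
    by (simp add: sum.inter_filter[OF finite_compositions])
  finally show ?thesis .
qed

theorem theorem3p1:
  fixes n :: nat and S :: "nat set"
  assumes "S \<subseteq> {1..n-1}"
  shows "\<forall>e :: nat \<Rightarrow> nat. finite {v. e v \<noteq> 0} \<longrightarrow>
     F_coeff n S e =
     (\<Sum>\<alpha> | \<alpha> \<in> compositions n \<and> unimodal \<alpha> S.
        Psi_coeff \<alpha> e / real (z \<alpha>) * (-1) ^ card (S - Sset \<alpha>))"
proof (intro allI impI)
  fix e :: "nat \<Rightarrow> nat" assume fin: "finite {v. e v \<noteq> 0}"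
  have "S \<subseteq> {1..<n}" using assms by fastforce
  then show "F_coeff n S e = (\<Sum>\<alpha> | \<alpha> \<in> compositions n \<and> unimodal \<alpha> S.
      Psi_coeff \<alpha> e / real (z \<alpha>) * (-1) ^ card (S - Sset \<alpha>))"
    unfolding sum_unimodal_Psi_coeff[OF fin] F_coeff_eq[OF fin assms]
    using refinement_weight_sum_eq composition_exponent_comp[OF fin]
    by (auto simp: mem_compositions_iff)
qed

end
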